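(* Let $\triangle ABC$ have side lengths $a=|BC|>b=|CA|>c=|AB|$ and angles $\alpha=\angle A$, $\beta=\angle B$, $\gamma=\angle C$, and suppose $60^\circ<\beta<90^\circ<\alpha$. For $x\in\{a,b,c\}$ let $W_x$ denote the largest area of an equilateral triangle contained in the closed triangle $\triangle ABC$ having one of its sides lying on side $x$. Then the maximum of $W_a,W_b,W_c$ is attained on the long side $a$, and the minimum is attained: (i) on the middle side $b$ when $\alpha/2+\beta<120^\circ$, and on both the short side $c$ and the middle side $b$ when $\alpha/2+\beta=120^\circ$; (ii) on the short side $c$ when $\alpha/2+\beta>120^\circ$.
   Context: An equilateral triangle of largest area contained in $\triangle ABC$ with one side lying on a given side of $\triangle ABC$ is called the wedged equilateral triangle (WET) on that side; it need not have all three vertices on the boundary of $\triangle ABC$. The max (resp. min) WET is the one of largest (resp. smallest) area among the three sides. *)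

theory Defs
  imports "HOL-Analysis.Analysis"
begin

type_synonym point = "real ^ 2"

definition vertex_angle :: "point \<Rightarrow> point \<Rightarrow> point \<Rightarrow> real" where
  "vertex_angle P V Q = arccos (((P - V) \<bullet> (Q - V)) / (norm (P - V) * norm (Q - V)))"

definition equilateral :: "point \<Rightarrow> point \<Rightarrow> point \<Rightarrow> bool" where
  "equilateral P Q R \<longleftrightarrow> dist P Q > 0 \<and> dist P Q = dist Q R \<and> dist Q R = dist R P"

definition eq_area :: "point \<Rightarrow> point \<Rightarrow> real" where
  "eq_area P Q = sqrt 3 / 4 * (dist P Q)\<^sup>2"

definition wedged_areas :: "point \<Rightarrow> point \<Rightarrow> point \<Rightarrow> point \<Rightarrow> point \<Rightarrow> real set" where
  "wedged_areas A B C U V =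
     {eq_area P Q | P Q R. equilateral P Q R
        \<and> convex hull {P, Q, R} \<subseteq> convex hull {A, B, C}
        \<and> closed_segment P Q \<subseteq> closed_segment U V}"

definition WET :: "point \<Rightarrow> point \<Rightarrow> point \<Rightarrow> point \<Rightarrow> point \<Rightarrow> real" where
  "WET A B C U V = Sup (wedged_areas A B C U V)"

end

theory Submission
  imports Defs
begin

text \<open>
  An equilateral triangle of side s standing on the side UV of a triangle UVW lies inside the
  triangle exactly when its apex does, i.e. when its base keeps a distance of at least
  s * wedge_clearance \<theta> from each end of UV, \<theta> being the angle there. Hence the WET on UV has
  side |UV| / (1 + wedge_clearance (angle at U) + wedge_clearance (angle at V)), and the clearance
  vanishes for angles of at least pi / 3.

  Under the hypotheses only the angle \<gamma> at C is smaller than pi / 3, and by the law of sines the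
  three WET areas are proportional to the squares of sin \<alpha> = sin (\<beta> + \<gamma>), sin \<beta> and
  sin (\<gamma> + pi / 3). The angles \<beta> + \<gamma>, \<beta> and \<gamma> + pi / 3 lie in [0, pi / 2], so the areas are
  ordered like them; finally \<beta> - (\<gamma> + pi / 3) = 2 (\<alpha> / 2 + \<beta> - 2 pi / 3).
\<close>

definition twice_area :: "point \<Rightarrow> point \<Rightarrow> point \<Rightarrow> real" where
  "twice_area U V W = sqrt ((norm (V - U))\<^sup>2 * (norm (W - U))\<^sup>2 - ((V - U) \<bullet> (W - U))\<^sup>2)"

lemma twice_area_squared:
  "(twice_area U V W)\<^sup>2 = (norm (V - U))\<^sup>2 * (norm (W - U))\<^sup>2 - ((V - U) \<bullet> (W - U))\<^sup>2"
proof -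
  have "\<bar>(V - U) \<bullet> (W - U)\<bar>\<^sup>2 \<le> (norm (V - U) * norm (W - U))\<^sup>2"
    by (intro power_mono Cauchy_Schwarz_ineq2) simp
  then show ?thesis
    by (simp add: twice_area_def power_mult_distrib)
qed

lemma twice_area_nonneg: "0 \<le> twice_area U V W"
  using twice_area_squared[of U V W] by (simp add: twice_area_def)

lemma twice_area_swap: "twice_area U W V = twice_area U V W"
  by (simp add: twice_area_def inner_commute mult.commute)

lemma twice_area_rotate: "twice_area V W U = twice_area U V W"
proof -
  have "(norm (W - V))\<^sup>2 * (norm (U - V))\<^sup>2 - ((W - V) \<bullet> (U - V))\<^sup>2
      = (norm (V - U))\<^sup>2 * (norm (W - U))\<^sup>2 - ((V - U) \<bullet> (W - U))\<^sup>2"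
    unfolding power2_norm_eq_inner
    by (simp add: inner_diff_left inner_diff_right inner_commute power2_eq_square algebra_simps)
  then show ?thesis
    by (simp add: twice_area_def)
qed

lemma twice_area_pos:
  assumes "\<not> collinear {U, V, W}"
  shows "0 < twice_area U V W"
proof -
  have "\<not> collinear {0, V - U, W - U}"
    using assms collinear_3[of V U W] by (simp add: insert_commute)
  then have "\<bar>(V - U) \<bullet> (W - U)\<bar> < norm (V - U) * norm (W - U)"
    using norm_cauchy_schwarz_equal Cauchy_Schwarz_ineq2 order_le_less by blast
  then have "((V - U) \<bullet> (W - U))\<^sup>2 < (norm (V - U) * norm (W - U))\<^sup>2"
    by (metis abs_ge_zero power2_abs power_strict_mono zero_less_numeral)
  then show ?thesis
    by (simp add: twice_area_def power_mult_distrib)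
qed

lemma vertex_angle_commute: "vertex_angle Q V P = vertex_angle P V Q"
  by (simp add: vertex_angle_def inner_commute mult.commute)

lemma vertex_angle_cos_bounds:
  fixes P V Q :: point
  defines "x \<equiv> (P - V) \<bullet> (Q - V) / (norm (P - V) * norm (Q - V))"
  shows "- 1 \<le> x" "x \<le> 1"
proof -
  have "\<bar>x\<bar> \<le> 1"
    using Cauchy_Schwarz_ineq2[of "P - V" "Q - V"] unfolding x_def
    by (cases "norm (P - V) * norm (Q - V) = 0") (simp_all add: abs_mult divide_le_eq_1)
  then show "- 1 \<le> x" "x \<le> 1"
    by auto
qed

lemma vertex_angle_bounds: "0 \<le> vertex_angle P V Q" "vertex_angle P V Q \<le> pi"
  using vertex_angle_cos_bounds[of P V Q]
  by (simp_all add: vertex_angle_def arccos_lbound arccos_ubound)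

lemma cos_vertex_angle:
  "cos (vertex_angle P V Q) = ((P - V) \<bullet> (Q - V)) / (dist P V * dist Q V)"
  using vertex_angle_cos_bounds[of P V Q] by (simp add: vertex_angle_def dist_norm)

lemma sin_vertex_angle:
  assumes "P \<noteq> V" "Q \<noteq> V"
  shows "sin (vertex_angle P V Q) = twice_area V P Q / (dist P V * dist Q V)"
proof -
  define n where "n = dist P V * dist Q V"
  have n: "0 < n" using assms by (simp add: n_def)
  have "sin (vertex_angle P V Q) = sqrt (1 - (((P - V) \<bullet> (Q - V)) / n)\<^sup>2)"
    using vertex_angle_cos_bounds[of P V Q]
    by (simp add: vertex_angle_def sin_arccos n_def dist_norm)
  also have "1 - (((P - V) \<bullet> (Q - V)) / n)\<^sup>2 = (twice_area V P Q / n)\<^sup>2"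
    using assms by (simp add: twice_area_squared n_def dist_norm power_divide power_mult_distrib
        diff_divide_distrib)
  finally show ?thesis
    using n twice_area_nonneg[of V P Q] by (simp add: n_def)
qed

lemma noncollinear_distinct:
  assumes "\<not> collinear {A, B, C}"
  shows "A \<noteq> B" "B \<noteq> C" "A \<noteq> C"
  using assms by (auto simp: collinear_2 insert_commute)

lemma vertex_angle_strict_bounds:
  assumes "\<not> collinear {P, V, Q}"
  shows "0 < vertex_angle P V Q" "vertex_angle P V Q < pi"
proof -
  have "P \<noteq> V" "Q \<noteq> V"
    using noncollinear_distinct[OF assms] by auto
  moreover have "0 < twice_area V P Q"
    using twice_area_pos[of V P Q] assms by (simp add: insert_commute)
  ultimately have "sin (vertex_angle P V Q) \<noteq> 0"
    by (simp add: sin_vertex_angle)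
  then show "0 < vertex_angle P V Q" "vertex_angle P V Q < pi"
    using vertex_angle_bounds[of P V Q] by (auto simp: order_le_less)
qed

lemma cot_vertex_angle:
  assumes "\<not> collinear {P, V, Q}"
  shows "cot (vertex_angle P V Q) = ((P - V) \<bullet> (Q - V)) / twice_area V P Q"
  using noncollinear_distinct[OF assms] by (simp add: cot_def cos_vertex_angle sin_vertex_angle)

lemma law_of_sines:
  assumes "\<not> collinear {A, B, C}"
  shows "dist B C * sin (vertex_angle A C B) = dist A B * sin (vertex_angle B A C)"
  using noncollinear_distinct[OF assms]
  by (simp add: sin_vertex_angle twice_area_rotate[of A B C] twice_area_rotate[of B C A]
      dist_commute field_simps)

lemma sin_cos_add_vertex_angles:
  assumes "\<not> collinear {A, B, C}"
  shows "sin (vertex_angle B A C + vertex_angle A B C) = sin (vertex_angle A C B)"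
    and "cos (vertex_angle B A C + vertex_angle A B C) = - cos (vertex_angle A C B)"
proof -
  define \<alpha> \<beta> \<gamma> where "\<alpha> = vertex_angle B A C" "\<beta> = vertex_angle A B C" "\<gamma> = vertex_angle A C B"
  define a b c where "a = dist B C" "b = dist C A" "c = dist A B"
  define xA xB xC where "xA = (B - A) \<bullet> (C - A)" "xB = (A - B) \<bullet> (C - B)" "xC = (A - C) \<bullet> (B - C)"
  define D where "D = twice_area A B C"
  have pos: "0 < a" "0 < b" "0 < c" "0 < D"
    using noncollinear_distinct[OF assms] twice_area_pos[OF assms]
    by (simp_all add: a_b_c_def D_def)
  have cos: "cos \<alpha> = xA / (c * b)" "cos \<beta> = xB / (c * a)" "cos \<gamma> = xC / (b * a)"
    by (simp_all add: \<alpha>_\<beta>_\<gamma>_def xA_xB_xC_def a_b_c_def cos_vertex_angle dist_commute)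
  have sin: "sin \<alpha> = D / (c * b)" "sin \<beta> = D / (c * a)" "sin \<gamma> = D / (b * a)"
    using noncollinear_distinct[OF assms]
    by (simp_all add: \<alpha>_\<beta>_\<gamma>_def a_b_c_def D_def sin_vertex_angle dist_commute
        twice_area_swap[of B A C] twice_area_rotate[of B C A] twice_area_rotate[of C A B])
  have c2: "c\<^sup>2 = xA + xB"
    unfolding a_b_c_def xA_xB_xC_def dist_norm power2_norm_eq_inner
    by (simp add: inner_diff_left inner_diff_right inner_commute)
  have D2: "D\<^sup>2 = xA * xB + xB * xC + xC * xA"
    unfolding D_def twice_area_squared xA_xB_xC_def power2_norm_eq_inner
    by (simp add: inner_diff_left inner_diff_right inner_commute power2_eq_square algebra_simps)
  have "sin (\<alpha> + \<beta>) = D * (xA + xB) / (a * b * c\<^sup>2)"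
    using pos unfolding sin_add sin cos by (simp add: field_simps power2_eq_square)
  also have "\<dots> = sin \<gamma>"
    using pos unfolding c2[symmetric] sin by (simp add: field_simps power2_eq_square)
  finally show "sin (\<alpha> + \<beta>) = sin \<gamma>" .
  have "cos (\<alpha> + \<beta>) = (xA * xB - D\<^sup>2) / (a * b * c\<^sup>2)"
    using pos unfolding cos_add sin cos by (simp add: field_simps power2_eq_square)
  also have "xA * xB - D\<^sup>2 = - c\<^sup>2 * xC"
    unfolding D2 c2 by (simp add: algebra_simps)
  also have "- c\<^sup>2 * xC / (a * b * c\<^sup>2) = - cos \<gamma>"
    using pos unfolding cos by (simp add: field_simps power2_eq_square)
  finally show "cos (\<alpha> + \<beta>) = - cos \<gamma>" .
qed

lemma vertex_angle_sum:
  assumes "\<not> collinear {A, B, C}"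
  shows "vertex_angle B A C + vertex_angle A B C + vertex_angle A C B = pi"
proof -
  define \<alpha> \<beta> \<gamma> where "\<alpha> = vertex_angle B A C" "\<beta> = vertex_angle A B C" "\<gamma> = vertex_angle A C B"
  have bounds: "0 \<le> \<alpha>" "\<alpha> \<le> pi" "0 \<le> \<beta>" "\<beta> \<le> pi" "0 < \<gamma>" "\<gamma> < pi"
    using vertex_angle_bounds vertex_angle_strict_bounds[of A C B] assms
    by (simp_all add: \<alpha>_\<beta>_\<gamma>_def insert_commute)
  then have "0 < sin (\<alpha> + \<beta>)"
    using sin_cos_add_vertex_angles(1)[OF assms] by (simp add: \<alpha>_\<beta>_\<gamma>_def sin_gt_zero)
  then have "\<alpha> + \<beta> \<le> pi"
    using bounds sin_le_zero[of "\<alpha> + \<beta>"] by (cases "\<alpha> + \<beta> = 2 * pi") force+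
  moreover have "cos (\<alpha> + \<beta>) = cos (pi - \<gamma>)"
    using sin_cos_add_vertex_angles(2)[OF assms] by (simp add: \<alpha>_\<beta>_\<gamma>_def)
  ultimately have "\<alpha> + \<beta> = pi - \<gamma>"
    using bounds by (intro cos_inj_pi[of "\<alpha> + \<beta>" "pi - \<gamma>"]) auto
  then show ?thesis
    by (simp add: \<alpha>_\<beta>_\<gamma>_def)
qed

lemma cot_add_base_angles:
  assumes "\<not> collinear {U, V, W}"
  shows "cot (vertex_angle W U V) + cot (vertex_angle W V U) = (dist U V)\<^sup>2 / twice_area U V W"
proof -
  have "cot (vertex_angle W U V) + cot (vertex_angle W V U)
      = ((W - U) \<bullet> (V - U) + (W - V) \<bullet> (U - V)) / twice_area U V W"
  proof -
    have D: "twice_area U W V = twice_area U V W" "twice_area V W U = twice_area U V W"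
      by (rule twice_area_swap) (rule twice_area_rotate)
    show ?thesis
      using assms cot_vertex_angle[of W U V] cot_vertex_angle[of W V U]
      by (simp add: insert_commute add_divide_distrib D)
  qed
  also have "(W - U) \<bullet> (V - U) + (W - V) \<bullet> (U - V) = (dist U V)\<^sup>2"
    by (simp add: dist_norm power2_norm_eq_inner inner_diff_left inner_diff_right inner_commute)
  finally show ?thesis .
qed

lemma equilateral_apex_centered_iff:
  fixes h e :: "'a::real_inner"
  assumes "s \<noteq> 0"
  shows "norm (h + s *\<^sub>R e) = 2 * \<bar>s\<bar> * norm e \<and> norm (h - s *\<^sub>R e) = 2 * \<bar>s\<bar> * norm e
    \<longleftrightarrow> h \<bullet> e = 0 \<and> h \<bullet> h = 3 * s\<^sup>2 * (e \<bullet> e)"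
proof -
  have "norm (h + t *\<^sub>R e) = 2 * \<bar>s\<bar> * norm e
      \<longleftrightarrow> h \<bullet> h + 2 * t * (h \<bullet> e) + t\<^sup>2 * (e \<bullet> e) = 4 * s\<^sup>2 * (e \<bullet> e)" for t
  proof -
    have "(norm (h + t *\<^sub>R e))\<^sup>2 = h \<bullet> h + 2 * t * (h \<bullet> e) + t\<^sup>2 * (e \<bullet> e)"
      unfolding power2_norm_eq_inner
      by (simp add: inner_add_left inner_add_right inner_commute power2_eq_square algebra_simps)
    moreover have "(2 * \<bar>s\<bar> * norm e)\<^sup>2 = 4 * s\<^sup>2 * (e \<bullet> e)"
      by (simp add: power_mult_distrib power2_norm_eq_inner)
    ultimately show ?thesis
      by (metis abs_ge_zero mult_nonneg_nonneg norm_ge_zero power2_eq_iff_nonneg zero_le_numeral)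
  qed
  moreover have "(y + 2 * s * z + s\<^sup>2 * x = 4 * s\<^sup>2 * x \<and> y + 2 * - s * z + (- s)\<^sup>2 * x = 4 * s\<^sup>2 * x)
      \<longleftrightarrow> s * z = 0 \<and> y = 3 * s\<^sup>2 * x" for y z x
    by (auto simp: algebra_simps)
  ultimately show ?thesis
    using assms by (metis (no_types, lifting) diff_conv_add_uminus mult_eq_0_iff scaleR_minus_left)
qed

lemma equilateral_apex_iff:
  fixes e g :: "'a::real_inner"
  assumes D: "0 < D" "D\<^sup>2 = (e \<bullet> e) * (g \<bullet> g) - (e \<bullet> g)\<^sup>2"
    and "p \<noteq> q" "0 \<le> \<nu>"
  shows "dist (p *\<^sub>R e) (\<mu> *\<^sub>R e + \<nu> *\<^sub>R g) = \<bar>q - p\<bar> * norm e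
       \<and> dist (q *\<^sub>R e) (\<mu> *\<^sub>R e + \<nu> *\<^sub>R g) = \<bar>q - p\<bar> * norm e
     \<longleftrightarrow> \<nu> = sqrt 3 / 2 * \<bar>q - p\<bar> * (e \<bullet> e) / D
       \<and> \<mu> = (p + q) / 2 - \<nu> * (e \<bullet> g) / (e \<bullet> e)"
proof -
  define X where "X = e \<bullet> e"
  define s where "s = (q - p) / 2"
  \<comment> \<open>h points from the midpoint of the base to the apex: equidistance from the two base
    points means h \<bullet> e = 0, and then Lagrange's identity measures the height by \<nu> D.\<close>
  define k where "k = \<mu> - (p + q) / 2"
  define h where "h = k *\<^sub>R e + \<nu> *\<^sub>R g"
  have "e \<noteq> 0"
    using D by auto
  then have X: "0 < X"
    by (simp add: X_def)
  have "s \<noteq> 0"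
    using \<open>p \<noteq> q\<close> by (simp add: s_def)
  have "dist (p *\<^sub>R e) (\<mu> *\<^sub>R e + \<nu> *\<^sub>R g) = norm (h + s *\<^sub>R e)"
    "dist (q *\<^sub>R e) (\<mu> *\<^sub>R e + \<nu> *\<^sub>R g) = norm (h - s *\<^sub>R e)"
  proof -
    have P: "\<mu> *\<^sub>R e + \<nu> *\<^sub>R g - p *\<^sub>R e = h + s *\<^sub>R e"
      and Q: "\<mu> *\<^sub>R e + \<nu> *\<^sub>R g - q *\<^sub>R e = h - s *\<^sub>R e"
      unfolding h_def k_def s_def
      by (simp_all add: scaleR_left_distrib[symmetric] scaleR_diff_left[symmetric]
          algebra_simps field_simps)
    show "dist (p *\<^sub>R e) (\<mu> *\<^sub>R e + \<nu> *\<^sub>R g) = norm (h + s *\<^sub>R e)"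
      "dist (q *\<^sub>R e) (\<mu> *\<^sub>R e + \<nu> *\<^sub>R g) = norm (h - s *\<^sub>R e)"
      unfolding P[symmetric] Q[symmetric] by (simp_all add: dist_norm norm_minus_commute)
  qed
  moreover have "\<bar>q - p\<bar> = 2 * \<bar>s\<bar>"
    by (simp add: s_def)
  ultimately have "dist (p *\<^sub>R e) (\<mu> *\<^sub>R e + \<nu> *\<^sub>R g) = \<bar>q - p\<bar> * norm e
       \<and> dist (q *\<^sub>R e) (\<mu> *\<^sub>R e + \<nu> *\<^sub>R g) = \<bar>q - p\<bar> * norm e
     \<longleftrightarrow> h \<bullet> e = 0 \<and> h \<bullet> h = 3 * s\<^sup>2 * X"
    using equilateral_apex_centered_iff[OF \<open>s \<noteq> 0\<close>] by (simp add: X_def)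
  also have "\<dots> \<longleftrightarrow> h \<bullet> e = 0 \<and> X * (h \<bullet> h) = 3 * s\<^sup>2 * X\<^sup>2"
    using X by (auto simp: power2_eq_square)
  also have "\<dots> \<longleftrightarrow> h \<bullet> e = 0 \<and> (\<nu> * D)\<^sup>2 = (sqrt 3 / 2 * \<bar>q - p\<bar> * X)\<^sup>2"
  proof -
    have "X * (h \<bullet> h) = (h \<bullet> e)\<^sup>2 + \<nu>\<^sup>2 * D\<^sup>2"
      unfolding D(2) by (simp add: h_def X_def inner_add_left inner_add_right inner_commute
          power2_eq_square algebra_simps)
    then show ?thesis
      using \<open>\<bar>q - p\<bar> = 2 * \<bar>s\<bar>\<close> by (auto simp: power_mult_distrib)
  qed
  also have "\<dots> \<longleftrightarrow> h \<bullet> e = 0 \<and> \<nu> * D = sqrt 3 / 2 * \<bar>q - p\<bar> * X"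
    using D(1) X \<open>0 \<le> \<nu>\<close> by (simp add: power2_eq_iff_nonneg)
  also have "h \<bullet> e = \<mu> * X + \<nu> * (e \<bullet> g) - (p + q) / 2 * X"
    by (simp add: h_def k_def X_def inner_add_left inner_commute algebra_simps)
  finally show ?thesis
    using X D(1) unfolding X_def by (auto simp: field_simps)
qed

text \<open>
  With the vertex at the origin and the base [t, t + s] on the x-axis, the apex
  (t + s / 2, (sqrt 3 / 2) s) lies inside the angle \<theta> iff t \<ge> s (sqrt 3 cot \<theta> - 1) / 2.
\<close>
definition wedge_clearance :: "real \<Rightarrow> real" where
  "wedge_clearance \<theta> = max 0 ((sqrt 3 * cot \<theta> - 1) / 2)"

lemma wedge_clearance_nonneg: "0 \<le> wedge_clearance \<theta>"
  by (simp add: wedge_clearance_def)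

lemma wedge_clearance_eq_0:
  assumes "pi / 3 \<le> \<theta>" "\<theta> < pi"
  shows "wedge_clearance \<theta> = 0"
proof -
  have "0 < sin \<theta>"
    using assms by (intro sin_gt_zero) auto
  then have "sqrt 3 * cot \<theta> - 1 = - 2 * sin (\<theta> - pi / 3) / sin \<theta>"
    unfolding sin_diff sin_60 cos_60 by (simp add: cot_def field_simps)
  moreover have "0 \<le> sin (\<theta> - pi / 3)"
    using assms by (intro sin_ge_zero) auto
  ultimately show ?thesis
    using \<open>0 < sin \<theta>\<close> by (simp add: wedge_clearance_def divide_nonpos_pos)
qed

lemma one_plus_wedge_clearance:
  assumes "0 < \<theta>" "\<theta> \<le> pi / 3"
  shows "1 + wedge_clearance \<theta> = sin (\<theta> + pi / 3) / sin \<theta>"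
proof -
  have "0 < sin \<theta>"
    using assms by (intro sin_gt_zero) auto
  then have "sqrt 3 * cot \<theta> - 1 = 2 * sin (pi / 3 - \<theta>) / sin \<theta>"
    unfolding sin_diff sin_60 cos_60 by (simp add: cot_def field_simps)
  moreover have "0 \<le> sin (pi / 3 - \<theta>)"
    using assms by (intro sin_ge_zero) auto
  ultimately have "0 \<le> sqrt 3 * cot \<theta> - 1"
    using \<open>0 < sin \<theta>\<close> by simp
  then have "1 + wedge_clearance \<theta> = (sqrt 3 * cot \<theta> + 1) / 2"
    by (simp add: wedge_clearance_def add_divide_distrib diff_divide_distrib)
  also have "\<dots> = sin (\<theta> + pi / 3) / sin \<theta>"
    using \<open>0 < sin \<theta>\<close> unfolding sin_add sin_60 cos_60 by (simp add: cot_def field_simps)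
  finally show ?thesis .
qed

lemma equilateral_on_side_iff:
  assumes tri: "\<not> collinear {U, V, W}" and "p < q" "0 \<le> \<nu>"
  shows "equilateral (U + p *\<^sub>R (V - U)) (U + q *\<^sub>R (V - U)) (U + \<mu> *\<^sub>R (V - U) + \<nu> *\<^sub>R (W - U))
    \<longleftrightarrow> \<nu> = sqrt 3 / 2 * (q - p) * (cot (vertex_angle W U V) + cot (vertex_angle W V U))
      \<and> \<mu> = p - (q - p) * ((sqrt 3 * cot (vertex_angle W U V) - 1) / 2)"
proof -
  define e g where "e = V - U" "g = W - U"
  define D where "D = twice_area U V W"
  have D: "0 < D" "D\<^sup>2 = (e \<bullet> e) * (g \<bullet> g) - (e \<bullet> g)\<^sup>2"
    using twice_area_pos[OF tri]
    by (simp_all add: D_def e_g_def twice_area_squared power2_norm_eq_inner)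
  have "e \<noteq> 0"
    using noncollinear_distinct[OF tri] by (simp add: e_g_def)
  then have X: "0 < e \<bullet> e"
    by simp
  have cot_U: "cot (vertex_angle W U V) = (e \<bullet> g) / D"
    using tri cot_vertex_angle[of W U V]
    by (simp add: insert_commute D_def e_g_def inner_commute twice_area_swap)
  have cot_sum: "cot (vertex_angle W U V) + cot (vertex_angle W V U) = (e \<bullet> e) / D"
  proof -
    have "dist U V = norm e"
      by (metis dist_commute dist_norm e_g_def(1))
    then show ?thesis
      using cot_add_base_angles[OF tri] by (simp add: D_def power2_norm_eq_inner)
  qed
  have "dist (U + p *\<^sub>R e) (U + q *\<^sub>R e) = (q - p) * norm e"
    using \<open>p < q\<close> by (simp add: dist_norm norm_minus_commute flip: scaleR_diff_left)
  moreover have "0 < (q - p) * norm e"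
    using \<open>p < q\<close> \<open>e \<noteq> 0\<close> by simp
  ultimately have "equilateral (U + p *\<^sub>R e) (U + q *\<^sub>R e) (U + \<mu> *\<^sub>R e + \<nu> *\<^sub>R g)
      \<longleftrightarrow> dist (p *\<^sub>R e) (\<mu> *\<^sub>R e + \<nu> *\<^sub>R g) = \<bar>q - p\<bar> * norm e
        \<and> dist (q *\<^sub>R e) (\<mu> *\<^sub>R e + \<nu> *\<^sub>R g) = \<bar>q - p\<bar> * norm e"
    using \<open>p < q\<close> by (auto simp: equilateral_def add.assoc dist_commute)
  also have "\<dots> \<longleftrightarrow> \<nu> = sqrt 3 / 2 * \<bar>q - p\<bar> * (e \<bullet> e) / D
      \<and> \<mu> = (p + q) / 2 - \<nu> * (e \<bullet> g) / (e \<bullet> e)"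
    using \<open>p < q\<close> \<open>0 \<le> \<nu>\<close> by (intro equilateral_apex_iff D) auto
  also have "\<dots> \<longleftrightarrow> \<nu> = sqrt 3 / 2 * (q - p) * ((e \<bullet> e) / D)
      \<and> \<mu> = p - (q - p) * ((sqrt 3 * ((e \<bullet> g) / D) - 1) / 2)"
  proof -
    have "(p + q) / 2 - sqrt 3 / 2 * (q - p) * (e \<bullet> e) / D * (e \<bullet> g) / (e \<bullet> e)
        = p - (q - p) * ((sqrt 3 * ((e \<bullet> g) / D) - 1) / 2)"
      using D(1) X by (simp add: field_simps)
    then show ?thesis
      using \<open>p < q\<close> by auto
  qed
  finally show ?thesis
    unfolding cot_sum unfolding cot_U by (simp add: e_g_def)
qed

lemma convex_hull_3_apex_iff:
  fixes U V W :: "'a::real_vector"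
  assumes "P \<in> convex hull {U, V, W}" "Q \<in> convex hull {U, V, W}"
  shows "(\<exists>R. E R \<and> convex hull {P, Q, R} \<subseteq> convex hull {U, V, W})
    \<longleftrightarrow> (\<exists>\<mu> \<nu>. 0 \<le> \<mu> \<and> 0 \<le> \<nu> \<and> \<mu> + \<nu> \<le> 1 \<and> E (U + \<mu> *\<^sub>R (V - U) + \<nu> *\<^sub>R (W - U)))"
proof -
  have "convex hull {P, Q, R} \<subseteq> convex hull {U, V, W} \<longleftrightarrow> R \<in> convex hull {U, V, W}" for R
  proof
    assume "R \<in> convex hull {U, V, W}"
    with assms show "convex hull {P, Q, R} \<subseteq> convex hull {U, V, W}"
      by (simp add: convex_hull_subset)
  qed (use hull_inc[of R "{P, Q, R}"] in blast)
  then show ?thesis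
    unfolding convex_hull_3_alt by auto
qed

lemma equilateral_on_side_fits_iff:
  assumes tri: "\<not> collinear {U, V, W}" and pq: "0 \<le> p" "p < q" "q \<le> 1"
  defines "P \<equiv> U + p *\<^sub>R (V - U)" and "Q \<equiv> U + q *\<^sub>R (V - U)"
  shows "(\<exists>R. equilateral P Q R \<and> convex hull {P, Q, R} \<subseteq> convex hull {U, V, W})
    \<longleftrightarrow> (q - p) * wedge_clearance (vertex_angle W U V) \<le> p
      \<and> (q - p) * wedge_clearance (vertex_angle W V U) \<le> 1 - q"
proof -
  define e g where "e = V - U" "g = W - U"
  define c\<^sub>1 c\<^sub>2 where "c\<^sub>1 = (sqrt 3 * cot (vertex_angle W U V) - 1) / 2"
    "c\<^sub>2 = (sqrt 3 * cot (vertex_angle W V U) - 1) / 2"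
  define \<nu>\<^sub>0 \<mu>\<^sub>0 where
    "\<nu>\<^sub>0 = sqrt 3 / 2 * (q - p) * (cot (vertex_angle W U V) + cot (vertex_angle W V U))"
    "\<mu>\<^sub>0 = p - (q - p) * c\<^sub>1"
  have "0 < \<nu>\<^sub>0"
    using pq twice_area_pos[OF tri] noncollinear_distinct[OF tri]
    by (simp add: \<nu>\<^sub>0_\<mu>\<^sub>0_def cot_add_base_angles[OF tri])
  have \<mu>\<nu>\<^sub>0: "\<mu>\<^sub>0 + \<nu>\<^sub>0 = q + (q - p) * c\<^sub>2"
    by (simp add: \<nu>\<^sub>0_\<mu>\<^sub>0_def c\<^sub>1_c\<^sub>2_def field_simps)
  have "P \<in> convex hull {U, V, W}"
    unfolding convex_hull_3_alt P_def using pq by (intro CollectI exI[of _ p] exI[of _ 0]) simp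
  moreover have "Q \<in> convex hull {U, V, W}"
    unfolding convex_hull_3_alt Q_def using pq by (intro CollectI exI[of _ q] exI[of _ 0]) simp
  ultimately have "(\<exists>R. equilateral P Q R \<and> convex hull {P, Q, R} \<subseteq> convex hull {U, V, W})
      \<longleftrightarrow> (\<exists>\<mu> \<nu>. 0 \<le> \<mu> \<and> 0 \<le> \<nu> \<and> \<mu> + \<nu> \<le> 1 \<and> equilateral P Q (U + \<mu> *\<^sub>R e + \<nu> *\<^sub>R g))"
    unfolding e_g_def by (rule convex_hull_3_apex_iff)
  also have "\<dots> \<longleftrightarrow> 0 \<le> \<mu>\<^sub>0 \<and> \<mu>\<^sub>0 + \<nu>\<^sub>0 \<le> 1"
  proof
    assume "\<exists>\<mu> \<nu>. 0 \<le> \<mu> \<and> 0 \<le> \<nu> \<and> \<mu> + \<nu> \<le> 1 \<and> equilateral P Q (U + \<mu> *\<^sub>R e + \<nu> *\<^sub>R g)"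
    then obtain \<mu> \<nu> where "0 \<le> \<mu>" "0 \<le> \<nu>" "\<mu> + \<nu> \<le> 1" "equilateral P Q (U + \<mu> *\<^sub>R e + \<nu> *\<^sub>R g)"
      by blast
    moreover from this have "\<nu> = \<nu>\<^sub>0" "\<mu> = \<mu>\<^sub>0"
      using equilateral_on_side_iff[OF tri pq(2) \<open>0 \<le> \<nu>\<close>, of \<mu>]
      by (simp_all add: P_def Q_def e_g_def \<nu>\<^sub>0_\<mu>\<^sub>0_def c\<^sub>1_c\<^sub>2_def)
    ultimately show "0 \<le> \<mu>\<^sub>0 \<and> \<mu>\<^sub>0 + \<nu>\<^sub>0 \<le> 1"
      by simp
  next
    assume "0 \<le> \<mu>\<^sub>0 \<and> \<mu>\<^sub>0 + \<nu>\<^sub>0 \<le> 1"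
    moreover have "equilateral P Q (U + \<mu>\<^sub>0 *\<^sub>R e + \<nu>\<^sub>0 *\<^sub>R g)"
      using equilateral_on_side_iff[OF tri pq(2) less_imp_le[OF \<open>0 < \<nu>\<^sub>0\<close>], of \<mu>\<^sub>0]
      by (simp add: P_def Q_def e_g_def \<nu>\<^sub>0_\<mu>\<^sub>0_def c\<^sub>1_c\<^sub>2_def)
    ultimately show "\<exists>\<mu> \<nu>. 0 \<le> \<mu> \<and> 0 \<le> \<nu> \<and> \<mu> + \<nu> \<le> 1 \<and> equilateral P Q (U + \<mu> *\<^sub>R e + \<nu> *\<^sub>R g)"
      using \<open>0 < \<nu>\<^sub>0\<close> less_imp_le by blast
  qed
  also have "\<dots> \<longleftrightarrow> (q - p) * c\<^sub>1 \<le> p \<and> (q - p) * c\<^sub>2 \<le> 1 - q"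
    unfolding \<mu>\<nu>\<^sub>0 by (auto simp: \<nu>\<^sub>0_\<mu>\<^sub>0_def)
  also have "\<dots> \<longleftrightarrow> (q - p) * max 0 c\<^sub>1 \<le> p \<and> (q - p) * max 0 c\<^sub>2 \<le> 1 - q"
    using pq by (auto simp: max_def intro: order_trans[OF mult_nonneg_nonpos])
  finally show ?thesis
    by (simp add: wedge_clearance_def c\<^sub>1_c\<^sub>2_def)
qed

definition WET_side :: "point \<Rightarrow> point \<Rightarrow> point \<Rightarrow> real" where
  "WET_side U V W
    = dist U V / (1 + wedge_clearance (vertex_angle W U V) + wedge_clearance (vertex_angle W V U))"

lemma eq_area_on_side:
  "eq_area (U + p *\<^sub>R (V - U)) (U + q *\<^sub>R (V - U)) = sqrt 3 / 4 * ((q - p) * dist U V)\<^sup>2"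
  by (simp add: eq_area_def dist_norm norm_minus_commute power_mult_distrib power2_commute
      flip: scaleR_diff_left)

lemma equilateral_commute: "equilateral Q P R \<longleftrightarrow> equilateral P Q R"
  by (auto simp: equilateral_def dist_commute)

lemma equilateral_on_side_area_le:
  assumes tri: "\<not> collinear {U, V, W}" and pq: "0 \<le> p" "p < q" "q \<le> 1"
    and "equilateral (U + p *\<^sub>R (V - U)) (U + q *\<^sub>R (V - U)) R"
    and "convex hull {U + p *\<^sub>R (V - U), U + q *\<^sub>R (V - U), R} \<subseteq> convex hull {U, V, W}"
  shows "eq_area (U + p *\<^sub>R (V - U)) (U + q *\<^sub>R (V - U)) \<le> sqrt 3 / 4 * (WET_side U V W)\<^sup>2"
proof -
  define F where
    "F = 1 + wedge_clearance (vertex_angle W U V) + wedge_clearance (vertex_angle W V U)"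
  have "1 \<le> F"
    by (simp add: F_def wedge_clearance_nonneg add_nonneg_nonneg)
  have "(q - p) * F \<le> 1"
    using equilateral_on_side_fits_iff[OF tri pq] assms(5,6) by (auto simp: F_def algebra_simps)
  then have "q - p \<le> 1 / F"
    using \<open>1 \<le> F\<close> by (simp add: field_simps)
  then have "(q - p) * dist U V \<le> dist U V / F"
    using mult_right_mono[of "q - p" "1 / F" "dist U V"] by simp
  have "eq_area (U + p *\<^sub>R (V - U)) (U + q *\<^sub>R (V - U)) = sqrt 3 / 4 * ((q - p) * dist U V)\<^sup>2"
    by (rule eq_area_on_side)
  also have "\<dots> \<le> sqrt 3 / 4 * (dist U V / F)\<^sup>2"
    using \<open>(q - p) * dist U V \<le> dist U V / F\<close> pq by (intro mult_left_mono power_mono) auto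
  finally show ?thesis
    unfolding WET_side_def F_def .
qed

lemma wedged_area_le:
  assumes tri: "\<not> collinear {U, V, W}" and "y \<in> wedged_areas U V W U V"
  shows "y \<le> sqrt 3 / 4 * (WET_side U V W)\<^sup>2"
proof -
  obtain P Q R where y: "y = eq_area P Q" and PQR: "equilateral P Q R"
      "convex hull {P, Q, R} \<subseteq> convex hull {U, V, W}" and "closed_segment P Q \<subseteq> closed_segment U V"
    using assms(2) unfolding wedged_areas_def by blast
  then have "P \<in> closed_segment U V" "Q \<in> closed_segment U V"
    by (simp_all add: subset_closed_segment)
  then obtain p q where p: "0 \<le> p" "p \<le> 1" "P = U + p *\<^sub>R (V - U)"
      and q: "0 \<le> q" "q \<le> 1" "Q = U + q *\<^sub>R (V - U)"
    unfolding segment_convex_hull convex_hull_2_alt by blast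
  consider "p < q" | "p = q" | "q < p"
    by linarith
  then show ?thesis
  proof cases
    case 1
    show ?thesis
      using PQR unfolding y p(3) q(3) by (rule equilateral_on_side_area_le[OF tri p(1) 1 q(2)])
  next
    case 2
    then show ?thesis
      using PQR(1) p q by (simp add: equilateral_def)
  next
    case 3
    have "equilateral Q P R" "convex hull {Q, P, R} \<subseteq> convex hull {U, V, W}"
      using PQR by (simp_all add: equilateral_commute insert_commute)
    then have "eq_area Q P \<le> sqrt 3 / 4 * (WET_side U V W)\<^sup>2"
      unfolding p(3) q(3) by (rule equilateral_on_side_area_le[OF tri q(1) 3 p(2)])
    then show ?thesis
      by (simp add: y eq_area_def dist_commute)
  qed
qed

lemma wedged_area_attained:
  assumes tri: "\<not> collinear {U, V, W}"
  shows "sqrt 3 / 4 * (WET_side U V W)\<^sup>2 \<in> wedged_areas U V W U V"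
proof -
  define f\<^sub>1 f\<^sub>2 where
    "f\<^sub>1 = wedge_clearance (vertex_angle W U V)" "f\<^sub>2 = wedge_clearance (vertex_angle W V U)"
  define F where "F = 1 + f\<^sub>1 + f\<^sub>2"
  define p q where "p = f\<^sub>1 / F" "q = (f\<^sub>1 + 1) / F"
  define P Q where "P = U + p *\<^sub>R (V - U)" "Q = U + q *\<^sub>R (V - U)"
  have "0 \<le> f\<^sub>1" "0 \<le> f\<^sub>2"
    by (simp_all add: f\<^sub>1_f\<^sub>2_def wedge_clearance_nonneg)
  then have pq: "0 \<le> p" "p < q" "q \<le> 1" and "q - p = 1 / F"
    by (simp_all add: p_q_def F_def field_simps)
  moreover have "(q - p) * f\<^sub>1 \<le> p" "(q - p) * f\<^sub>2 \<le> 1 - q"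
    using \<open>0 \<le> f\<^sub>1\<close> \<open>0 \<le> f\<^sub>2\<close> by (simp_all add: p_q_def F_def field_simps)
  ultimately obtain R where "equilateral P Q R" "convex hull {P, Q, R} \<subseteq> convex hull {U, V, W}"
    using equilateral_on_side_fits_iff[OF tri pq] unfolding P_Q_def f\<^sub>1_f\<^sub>2_def by blast
  moreover have "closed_segment P Q \<subseteq> closed_segment U V"
  proof -
    have "P \<in> closed_segment U V"
      unfolding segment_convex_hull convex_hull_2_alt P_Q_def using pq
      by (intro CollectI exI[of _ p]) simp
    moreover have "Q \<in> closed_segment U V"
      unfolding segment_convex_hull convex_hull_2_alt P_Q_def using pq
      by (intro CollectI exI[of _ q]) simp
    ultimately show ?thesis
      by (simp add: subset_closed_segment)
  qed
  moreover have "eq_area P Q = sqrt 3 / 4 * (dist U V / F)\<^sup>2"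
    unfolding P_Q_def eq_area_on_side \<open>q - p = 1 / F\<close> by simp
  ultimately show ?thesis
    unfolding wedged_areas_def WET_side_def F_def f\<^sub>1_f\<^sub>2_def mem_Collect_eq by metis
qed

lemma WET_eq:
  assumes "\<not> collinear {U, V, W}"
  shows "WET U V W U V = sqrt 3 / 4 * (WET_side U V W)\<^sup>2"
  unfolding WET_def using wedged_area_attained[OF assms] wedged_area_le[OF assms]
  by (intro cSup_eq_maximum) auto

lemma WET_rotate: "WET B C A U V = WET A B C U V"
  by (simp add: WET_def wedged_areas_def insert_commute)

lemma sgn_sin_power2_diff:
  assumes "0 \<le> x" "x \<le> pi / 2" "0 \<le> y" "y \<le> pi / 2"
  shows "sgn ((sin x)\<^sup>2 - (sin y)\<^sup>2) = sgn (x - y)"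
proof -
  have less: "(sin s)\<^sup>2 < (sin t)\<^sup>2" if "0 \<le> s" "s < t" "t \<le> pi / 2" for s t
  proof -
    have "sin s < sin t"
      using that by (subst sin_mono_less_eq) auto
    moreover have "0 \<le> sin s"
      using that by (intro sin_ge_zero) auto
    ultimately show ?thesis
      by (intro power_strict_mono) auto
  qed
  show ?thesis
    using less[of x y] less[of y x] assms by (cases x y rule: linorder_cases) auto
qed

lemma WET_proportional_sin_squares:
  assumes tri: "\<not> collinear {A, B, C}"
    and angles: "pi / 3 \<le> vertex_angle B A C" "pi / 3 \<le> vertex_angle A B C"
  obtains \<kappa> where "0 < \<kappa>"
    "WET A B C B C = \<kappa> * (sin (vertex_angle B A C))\<^sup>2"
    "WET A B C C A = \<kappa> * (sin (vertex_angle A B C))\<^sup>2"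
    "WET A B C A B = \<kappa> * (sin (vertex_angle A C B + pi / 3))\<^sup>2"
proof -
  define \<alpha> \<beta> \<gamma> where "\<alpha> = vertex_angle B A C" "\<beta> = vertex_angle A B C" "\<gamma> = vertex_angle A C B"
  have tri': "\<not> collinear {B, C, A}" "\<not> collinear {C, A, B}"
    "\<not> collinear {B, A, C}" "\<not> collinear {A, C, B}"
    using tri by (simp_all add: insert_commute)
  have "\<alpha> + \<beta> + \<gamma> = pi"
    using vertex_angle_sum[OF tri] by (simp add: \<alpha>_\<beta>_\<gamma>_def)
  moreover have "\<alpha> < pi" "\<beta> < pi" "0 < \<gamma>"
    using vertex_angle_strict_bounds tri tri' by (simp_all add: \<alpha>_\<beta>_\<gamma>_def)
  ultimately have clear: "wedge_clearance \<alpha> = 0" "wedge_clearance \<beta> = 0"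
      "1 + wedge_clearance \<gamma> = sin (\<gamma> + pi / 3) / sin \<gamma>"
    and "0 < sin \<gamma>" "0 < sin (\<gamma> + pi / 3)"
    using angles
    by (simp_all add: \<alpha>_\<beta>_\<gamma>_def wedge_clearance_eq_0 one_plus_wedge_clearance sin_gt_zero)
  define \<kappa> where "\<kappa> = sqrt 3 / 4 * (dist A B / sin (\<gamma> + pi / 3))\<^sup>2"
  show ?thesis
  proof
    show "0 < \<kappa>"
      using noncollinear_distinct[OF tri] \<open>0 < sin (\<gamma> + pi / 3)\<close> by (simp add: \<kappa>_def)
    have "WET A B C B C = sqrt 3 / 4 * (dist B C * sin \<gamma> / sin (\<gamma> + pi / 3))\<^sup>2"
      using WET_eq[OF tri'(1)] clear \<open>0 < sin \<gamma>\<close>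
      by (simp add: WET_side_def WET_rotate \<alpha>_\<beta>_\<gamma>_def vertex_angle_commute[of A C B])
    also have "dist B C * sin \<gamma> = dist A B * sin \<alpha>"
      using law_of_sines[OF tri] by (simp add: \<alpha>_\<beta>_\<gamma>_def)
    finally show "WET A B C B C = \<kappa> * (sin (vertex_angle B A C))\<^sup>2"
      by (simp add: \<kappa>_def \<alpha>_\<beta>_\<gamma>_def power_mult_distrib power_divide)
    have "WET A B C C A = sqrt 3 / 4 * (dist C A * sin \<gamma> / sin (\<gamma> + pi / 3))\<^sup>2"
      using WET_eq[OF tri'(2)] clear \<open>0 < sin \<gamma>\<close>
      by (simp add: WET_side_def WET_rotate[of B C A] WET_rotate[of A B C] \<alpha>_\<beta>_\<gamma>_def
          vertex_angle_commute[of B C A])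
    also have "dist C A * sin \<gamma> = dist A B * sin \<beta>"
      using law_of_sines[OF tri'(3)]
      by (simp add: \<alpha>_\<beta>_\<gamma>_def dist_commute vertex_angle_commute[of B C A])
    finally show "WET A B C C A = \<kappa> * (sin (vertex_angle A B C))\<^sup>2"
      by (simp add: \<kappa>_def \<alpha>_\<beta>_\<gamma>_def power_mult_distrib power_divide)
    have "WET A B C A B = sqrt 3 / 4 * (dist A B)\<^sup>2"
      using WET_eq[OF tri] clear
      by (simp add: WET_side_def \<alpha>_\<beta>_\<gamma>_def vertex_angle_commute[of C A B]
          vertex_angle_commute[of C B A])
    then show "WET A B C A B = \<kappa> * (sin (vertex_angle A C B + pi / 3))\<^sup>2"
      using \<open>0 < sin (\<gamma> + pi / 3)\<close> by (simp add: \<kappa>_def \<alpha>_\<beta>_\<gamma>_def power_divide)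
  qed
qed

theorem mainTheorem4:
  fixes A B C :: point
  defines "a \<equiv> dist B C" and "b \<equiv> dist C A" and "c \<equiv> dist A B"
    and "\<alpha> \<equiv> vertex_angle B A C" and "\<beta> \<equiv> vertex_angle A B C"
    and "Wa \<equiv> WET A B C B C" and "Wb \<equiv> WET A B C C A" and "Wc \<equiv> WET A B C A B"
  assumes noncol: "\<not> collinear {A, B, C}"
    and sides: "a > b" "b > c"
    and beta: "pi / 3 < \<beta>" "\<beta> < pi / 2"
    and alpha: "pi / 2 < \<alpha>"
  shows "Wa = Max {Wa, Wb, Wc}
     \<and> (\<alpha> / 2 + \<beta> < 2 * pi / 3 \<longrightarrow> Wb = Min {Wa, Wb, Wc} \<and> Wb < Wc)
     \<and> (\<alpha> / 2 + \<beta> = 2 * pi / 3 \<longrightarrow> Wb = Min {Wa, Wb, Wc} \<and> Wc = Wb)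
     \<and> (\<alpha> / 2 + \<beta> > 2 * pi / 3 \<longrightarrow> Wc = Min {Wa, Wb, Wc} \<and> Wc < Wb)"
proof -
  define \<gamma> where "\<gamma> = vertex_angle A C B"
  have "pi / 3 \<le> \<alpha>" "pi / 3 \<le> \<beta>"
    using alpha beta pi_gt_zero by linarith+
  then obtain \<kappa> where \<kappa>: "0 < \<kappa>" "Wa = \<kappa> * (sin \<alpha>)\<^sup>2" "Wb = \<kappa> * (sin \<beta>)\<^sup>2"
      "Wc = \<kappa> * (sin (\<gamma> + pi / 3))\<^sup>2"
    using WET_proportional_sin_squares[OF noncol] unfolding Wa_def Wb_def Wc_def \<alpha>_def \<beta>_def \<gamma>_def
    by blast
  have "\<alpha> + \<beta> + \<gamma> = pi" "0 < \<gamma>"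
    using vertex_angle_sum[OF noncol] vertex_angle_strict_bounds[of A C B] noncol
    by (simp_all add: \<alpha>_def \<beta>_def \<gamma>_def insert_commute)
  then have "sin \<alpha> = sin (\<beta> + \<gamma>)"
    by (metis add.assoc add_diff_cancel_left' sin_pi_minus)
  have sgn_W: "sgn (\<kappa> * (sin x)\<^sup>2 - \<kappa> * (sin y)\<^sup>2) = sgn (x - y)"
    if "0 \<le> x" "x \<le> pi / 2" "0 \<le> y" "y \<le> pi / 2" for x y
    using sgn_sin_power2_diff[OF that] \<kappa>(1) by (simp add: right_diff_distrib[symmetric] sgn_mult)
  have "sgn (Wa - Wb) = sgn \<gamma>" "sgn (Wa - Wc) = sgn (\<beta> - pi / 3)"
    "sgn (Wb - Wc) = sgn (\<beta> - (\<gamma> + pi / 3))"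
    using sgn_W[of "\<beta> + \<gamma>" \<beta>] sgn_W[of "\<beta> + \<gamma>" "\<gamma> + pi / 3"] sgn_W[of \<beta> "\<gamma> + pi / 3"]
      \<open>\<alpha> + \<beta> + \<gamma> = pi\<close> \<open>0 < \<gamma>\<close> alpha beta
    unfolding \<kappa>(2-4) \<open>sin \<alpha> = sin (\<beta> + \<gamma>)\<close> by simp_all
  moreover have "\<beta> - (\<gamma> + pi / 3) = 2 * (\<alpha> / 2 + \<beta> - 2 * pi / 3)"
    using \<open>\<alpha> + \<beta> + \<gamma> = pi\<close> by simp
  ultimately show ?thesis
    using \<open>0 < \<gamma>\<close> beta by (auto simp: sgn_if split: if_splits)
qed

end
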